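(* Let $n\ge2$ be even, and let $K=\langle A,B,T\rangle$ be a Kleinian group obtained as in case (a). Then the subgroup $$\Gamma=\langle A^{j}TA^{-j}: j=0,1,\dots,n-1\rangle$$ is a Schottky group of rank $n$ and has index $2n$ in $K$. It is not a normal subgroup of $K$.
   Context: Case (a): $A(z)=e^{2\pi i/n}z$ and $B(z)=1/z$ generate the dihedral group $D_n$ of order $2n$. $T$ is a loxodromic Möbius transformation with $TBT^{-1}=AB$. $K=\langle A,B,T\rangle$ is obtained as an HNN-extension of $D_n$ by $\langle T\rangle$ via the Klein–Maskit combination theorem. This means there exist closed discs $D_1,D_2\subset\widehat{\mathbb C}$ with boundary loops $\delta_1,\delta_2$ such that: - $h(D_1)\cap D_2=\emptyset$ for all $h\in D_n$; - $D_1$ is precisely invariant under $\langle B\rangle$ in $D_n$, i.e. $h(D_1)=D_1$ for $h\in\langle B\rangle$ and $h(D_1)\cap D_1=\emptyset$ for all other $h\in D_n$; - $D_2$ is precisely invariant under $\langle AB\rangle$ in $D_n$, defined in the same way; - $T(\delta_1)=\delta_2$ and $T$ maps the exterior of $D_1$ onto the interior of $D_2$. A Schottky group of rank $g$ is a Kleinian group generated by loxodromic transformations $A_1,\dots,A_g$ for which there exist $2g$ pairwise disjoint simple loops $\alpha_1,\alpha_1',\dots,\alpha_g,\alpha_g'$ with a common exterior domain $D$ such that $A_i(\alpha_i)=\alpha_i'$ and $A_i(D)\cap D=\emptyset$ for each $i$. *)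

theory Defs
  imports "HOL-Analysis.Analysis" "HOL-Algebra.Coset"
begin

text \<open>The Riemann sphere is modelled as complex option, None being the point at infinity,
with the topology of the one-point compactification of the complex plane.\<close>

type_synonym cpt = "complex option"

definition riemann_sphere :: "cpt topology" where
  "riemann_sphere = topology (\<lambda>U. open (Some -` U) \<and>
      (None \<in> U \<longrightarrow> compact (UNIV - Some -` U)))"

definition moeb :: "complex \<Rightarrow> complex \<Rightarrow> complex \<Rightarrow> complex \<Rightarrow> cpt \<Rightarrow> cpt" where
  "moeb a b c d z = (case z of
      None \<Rightarrow> (if c = 0 then None else Some (a / c))
    | Some w \<Rightarrow> (if c * w + d = 0 then None else Some ((a * w + b) / (c * w + d))))"

definition is_moebius :: "(cpt \<Rightarrow> cpt) \<Rightarrow> bool" where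
  "is_moebius f \<longleftrightarrow> (\<exists>a b c d. a * d - b * c \<noteq> 0 \<and> f = moeb a b c d)"

definition loxodromic :: "(cpt \<Rightarrow> cpt) \<Rightarrow> bool" where
  "loxodromic f \<longleftrightarrow> (\<exists>a b c d. a * d - b * c = 1 \<and> f = moeb a b c d \<and>
       (a + d)\<^sup>2 \<notin> complex_of_real ` {0..4})"

inductive_set mgen :: "(cpt \<Rightarrow> cpt) set \<Rightarrow> (cpt \<Rightarrow> cpt) set" for S where
  mgen_id: "id \<in> mgen S"
| mgen_gen: "f \<in> S \<Longrightarrow> f \<in> mgen S"
| mgen_inv: "f \<in> S \<Longrightarrow> inv_into UNIV f \<in> mgen S"
| mgen_comp: "f \<in> mgen S \<Longrightarrow> g \<in> mgen S \<Longrightarrow> f \<circ> g \<in> mgen S"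

text \<open>Kleinian group: a discrete group of Moebius transformations (identity isolated in PSL(2,C)).\<close>
definition kleinian :: "(cpt \<Rightarrow> cpt) set \<Rightarrow> bool" where
  "kleinian G \<longleftrightarrow> (\<forall>g\<in>G. is_moebius g) \<and> id \<in> G \<and>
     (\<forall>f\<in>G. \<forall>g\<in>G. f \<circ> g \<in> G \<and> inv_into UNIV f \<in> G) \<and>
     (\<exists>\<epsilon>>0. \<forall>g\<in>G. g \<noteq> id \<longrightarrow>
        (\<forall>a b c d. a * d - b * c = 1 \<and> g = moeb a b c d \<longrightarrow>
           \<epsilon> \<le> cmod (a - 1) + cmod b + cmod c + cmod (d - 1)))"

definition closed_disc :: "cpt set \<Rightarrow> bool" where
  "closed_disc D \<longleftrightarrow> (subtopology riemann_sphere D) homeomorphic_space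
                        (top_of_set (cball (0::complex) 1))"

definition simple_loop :: "cpt set \<Rightarrow> bool" where
  "simple_loop L \<longleftrightarrow> (subtopology riemann_sphere L) homeomorphic_space
                        (top_of_set (sphere (0::complex) 1))"

definition schottky :: "(cpt \<Rightarrow> cpt) set \<Rightarrow> nat \<Rightarrow> bool" where
  "schottky G g \<longleftrightarrow> kleinian G \<and>
    (\<exists>gen :: nat \<Rightarrow> cpt \<Rightarrow> cpt. \<exists>al al' E E' :: nat \<Rightarrow> cpt set. \<exists>D.
       G = mgen (gen ` {..<g}) \<and>
       (\<forall>i<g. loxodromic (gen i)) \<and>
       (\<forall>i<g. simple_loop (al i) \<and> simple_loop (al' i)) \<and>
       (\<forall>i<g. closed_disc (E i) \<and> closed_disc (E' i) \<and>
              riemann_sphere frontier_of (E i) = al i \<and>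
              riemann_sphere frontier_of (E' i) = al' i) \<and>
       (\<forall>i<g. \<forall>j<g. E i \<inter> E' j = {}) \<and>
       (\<forall>i<g. \<forall>j<g. i \<noteq> j \<longrightarrow> E i \<inter> E j = {} \<and> E' i \<inter> E' j = {}) \<and>
       D = UNIV - (\<Union>i<g. E i \<union> E' i) \<and>
       (\<forall>i<g. gen i ` (al i) = al' i \<and> gen i ` D \<inter> D = {}))"

definition moeb_group :: "(cpt \<Rightarrow> cpt) set \<Rightarrow> (cpt \<Rightarrow> cpt) monoid" where
  "moeb_group G = \<lparr>carrier = G, monoid.mult = (\<circ>), one = id\<rparr>"

definition precisely_invariant :: "cpt set \<Rightarrow> (cpt \<Rightarrow> cpt) set \<Rightarrow> (cpt \<Rightarrow> cpt) set \<Rightarrow> bool" where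
  "precisely_invariant D H G \<longleftrightarrow> (\<forall>h\<in>H. h ` D = D) \<and> (\<forall>h\<in>G - H. h ` D \<inter> D = {})"

end

theory Submission
  imports Defs "HOL-Homology.Invariance_of_Domain"
begin

text \<open>Write \<open>\<omega> = exp (2\<pi>i/n)\<close>, so that \<open>A\<close> is the rotation \<open>z \<mapsto> \<omega> z\<close> and the generators
  of \<open>\<Gamma>\<close> are the conjugates \<open>T\<^sub>u\<close> of \<open>T\<close> by the rotations \<open>z \<mapsto> u z\<close>, \<open>u\<close> an \<open>n\<close>-th root of unity.
  The hypotheses on \<open>D1\<close> and \<open>D2\<close> make the \<open>2n\<close> discs \<open>u D1\<close>, \<open>u D2\<close> pairwise disjoint,
  and \<open>T\<^sub>u\<close> maps the outside of \<open>u D1\<close> into \<open>u D2\<close>. By ping-pong, every nontrivial element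
  of \<open>\<Gamma>\<close> maps a point outside all the discs into one of them, so \<open>\<Gamma>\<close> is a Schottky group.
  The points \<open>0\<close> and \<open>\<infinity>\<close> lie outside all the discs and are permuted by the dihedral group
  \<open>D\<^sub>n = \<langle>A, B\<rangle>\<close>, so distinct elements of \<open>D\<^sub>n\<close> lie in distinct cosets of \<open>\<Gamma>\<close>.
  Conversely \<open>TB = ABT\<close> yields relations \<open>d T\<^sub>u = T\<^sub>v d'\<close> with \<open>d, d' \<in> D\<^sub>n\<close>, hence
  \<open>K = \<Gamma> D\<^sub>n\<close> and the index is \<open>|D\<^sub>n| = 2n\<close>. Finally \<open>BTB = \<omega>\<^sup>-\<^sup>1 T\<close>, so a normal \<open>\<Gamma>\<close>
  would contain the rotation \<open>z \<mapsto> z / \<omega>\<close>, a nontrivial element fixing \<open>0\<close>.\<close>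

section \<open>Moebius transformations\<close>

lemma moeb_adjugate_comp:
  fixes a b c d :: complex
  assumes det: "a * d - b * c \<noteq> 0"
  shows "moeb d (-b) (-c) a \<circ> moeb a b c d = id"
proof
  fix z
  show "(moeb d (-b) (-c) a \<circ> moeb a b c d) z = id z"
  proof (cases z)
    case None
    show ?thesis
    proof (cases "c = 0")
      case False
      then have "- c * (a / c) + a = 0" by simp
      with None False show ?thesis by (simp add: moeb_def)
    qed (use None in \<open>simp add: moeb_def\<close>)
  next
    case (Some v)
    show ?thesis
    proof (cases "c * v + d = 0")
      case True
      then have "c \<noteq> 0" using det by auto
      moreover have "d / - c = v" using True \<open>c \<noteq> 0\<close>
        by (simp add: divide_simps) (simp add: algebra_simps add_eq_0_iff)
      ultimately show ?thesis using Some True by (simp add: moeb_def)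
    next
      case False
      define y where "y = (a * v + b) / (c * v + d)"
      have den: "- c * y + a = (a * d - b * c) / (c * v + d)"
        using False unfolding y_def by (simp add: divide_simps) (simp add: algebra_simps)
      have num: "d * y + - b = (a * d - b * c) * v / (c * v + d)"
        using False unfolding y_def by (simp add: divide_simps) (simp add: algebra_simps)
      have "- c * y + a \<noteq> 0" using den det False by simp
      moreover have "(d * y + - b) / (- c * y + a) = v"
        unfolding den num using det False by simp
      ultimately show ?thesis using Some False by (simp add: moeb_def flip: y_def)
    qed
  qed
qed

lemma bij_moebius: "is_moebius f \<Longrightarrow> bij f"
proof -
  assume "is_moebius f"
  then obtain a b c d where det: "a * d - b * c \<noteq> 0" and f: "f = moeb a b c d"
    unfolding is_moebius_def by blast
  have det': "d * a - (- b) * (- c) \<noteq> 0" using det by (simp add: algebra_simps)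
  show "bij f"
    using o_bij[OF moeb_adjugate_comp[OF det] moeb_adjugate_comp[OF det', simplified]] f by simp
qed

lemma loxodromic_imp_moebius: "loxodromic f \<Longrightarrow> is_moebius f"
  unfolding loxodromic_def is_moebius_def by force

definition scaling :: "complex \<Rightarrow> cpt \<Rightarrow> cpt" where
  "scaling u = moeb u 0 0 1"

lemma scaling_Some [simp]: "scaling u (Some z) = Some (u * z)"
  and scaling_None [simp]: "scaling u None = None"
  by (simp_all add: scaling_def moeb_def)

lemma scaling_scaling [simp]: "scaling u (scaling v x) = scaling (u * v) x"
  by (cases x) auto

lemma scaling_1 [simp]: "scaling 1 = id"
  by (rule ext) (simp add: scaling_def moeb_def split: option.split)

lemma scaling_inj: "scaling u = scaling v \<Longrightarrow> u = v"
  by (drule fun_cong[of _ _ "Some 1"]) simp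

lemma scaling_cancel [simp]: "u \<noteq> 0 \<Longrightarrow> scaling (1 / u) (scaling u x) = x"
  "u \<noteq> 0 \<Longrightarrow> scaling u (scaling (1 / u) x) = x"
  by (cases x; simp)+

lemma bij_scaling: "u \<noteq> 0 \<Longrightarrow> bij (scaling u)"
  by (rule bij_betw_byWitness[where f' = "scaling (1 / u)"]) auto

lemma inv_into_scaling: "u \<noteq> 0 \<Longrightarrow> inv_into UNIV (scaling u) = scaling (1 / u)"
  by (rule inv_unique_comp) (auto simp: fun_eq_iff)

lemma image_scaling_Int:
  assumes "u \<noteq> 0" "v \<noteq> 0" "scaling (u / v) ` X \<inter> Y = {}"
  shows "scaling u ` X \<inter> scaling v ` Y = {}"
proof -
  have "scaling u ` X = scaling v ` scaling (u / v) ` X"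
    using assms by (simp add: image_image)
  then show ?thesis
    using assms bij_scaling[of v] by (simp flip: image_Int add: bij_is_inj)
qed

definition scaling_conj :: "complex \<Rightarrow> (cpt \<Rightarrow> cpt) \<Rightarrow> cpt \<Rightarrow> cpt" where
  "scaling_conj u f = scaling u \<circ> f \<circ> scaling (1 / u)"

lemma scaling_conj_apply: "scaling_conj u f x = scaling u (f (scaling (1 / u) x))"
  by (simp add: scaling_conj_def)

lemma scaling_conj_1 [simp]: "scaling_conj 1 f = f"
  by (simp add: scaling_conj_def)

lemma inv_into_scaling_conj:
  "bij f \<Longrightarrow> u \<noteq> 0 \<Longrightarrow> inv_into UNIV (scaling_conj u f) = scaling_conj u (inv_into UNIV f)"
  by (rule inv_unique_comp) (auto simp: fun_eq_iff scaling_conj_apply bij_is_surj bij_is_inj surj_f_inv_f)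

lemma bij_scaling_conj: "bij f \<Longrightarrow> u \<noteq> 0 \<Longrightarrow> bij (scaling_conj u f)"
  unfolding scaling_conj_def by (intro bij_comp bij_scaling) auto

lemma scaling_comp_scaling_conj:
  "u \<noteq> 0 \<Longrightarrow> v \<noteq> 0 \<Longrightarrow> scaling v \<circ> scaling_conj u f = scaling_conj (v * u) f \<circ> scaling v"
  by (rule ext) (simp add: scaling_conj_apply)

lemma scaling_conj_moeb:
  assumes "u \<noteq> 0"
  shows "scaling_conj u (moeb a b c d) = moeb a (u * b) (c / u) d"
proof
  fix x
  show "scaling_conj u (moeb a b c d) x = moeb a (u * b) (c / u) d x"
  proof (cases x)
    case None
    with assms show ?thesis by (simp add: scaling_conj_apply moeb_def)
  next
    case (Some z)
    have "c * (z / u) + d = c / u * z + d" by simp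
    moreover have "u * (a * (z / u) + b) = a * z + u * b" using assms by (simp add: field_simps)
    ultimately show ?thesis
      using Some assms by (simp add: scaling_conj_apply moeb_def)
  qed
qed

lemma loxodromic_scaling_conj:
  assumes "loxodromic f" "u \<noteq> 0"
  shows "loxodromic (scaling_conj u f)"
proof -
  obtain a b c d where "a * d - b * c = 1" "f = moeb a b c d" "(a + d)\<^sup>2 \<notin> complex_of_real ` {0..4}"
    using assms(1) unfolding loxodromic_def by blast
  moreover have "a * d - (u * b) * (c / u) = a * d - b * c" using assms(2) by simp
  ultimately show ?thesis
    unfolding loxodromic_def using assms(2) by (metis scaling_conj_moeb)
qed

section \<open>Topology of the Riemann sphere\<close>

lemma openin_riemann_sphere:
  "openin riemann_sphere U \<longleftrightarrow> open (Some -` U) \<and> (None \<in> U \<longrightarrow> compact (UNIV - Some -` U))"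
proof -
  have "istopology (\<lambda>U::cpt set. open (Some -` U) \<and> (None \<in> U \<longrightarrow> compact (UNIV - Some -` U)))"
    unfolding istopology_def
  proof (rule conjI; intro allI impI)
    fix S T :: "cpt set"
    assume S: "open (Some -` S) \<and> (None \<in> S \<longrightarrow> compact (UNIV - Some -` S))"
      and T: "open (Some -` T) \<and> (None \<in> T \<longrightarrow> compact (UNIV - Some -` T))"
    have "UNIV - Some -` (S \<inter> T) = (UNIV - Some -` S) \<union> (UNIV - Some -` T)" by auto
    with S T show "open (Some -` (S \<inter> T)) \<and> (None \<in> S \<inter> T \<longrightarrow> compact (UNIV - Some -` (S \<inter> T)))"
      by (auto simp: open_Int)
  next
    fix \<K> :: "cpt set set"
    assume K: "\<forall>K\<in>\<K>. open (Some -` K) \<and> (None \<in> K \<longrightarrow> compact (UNIV - Some -` K))"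
    then have op: "open (Some -` \<Union>\<K>)" by (auto simp: vimage_Union)
    have "compact (UNIV - Some -` \<Union>\<K>)" if N: "None \<in> \<Union>\<K>"
    proof -
      obtain S where S: "S \<in> \<K>" "None \<in> S" using N by auto
      have "UNIV - Some -` \<Union>\<K> = (UNIV - Some -` \<Union>\<K>) \<inter> (UNIV - Some -` S)" using S by auto
      moreover have "closed (UNIV - Some -` \<Union>\<K>)" using op by (simp add: closed_def)
      ultimately show ?thesis using K S by (metis closed_Int_compact)
    qed
    with op show "open (Some -` \<Union>\<K>) \<and> (None \<in> \<Union>\<K> \<longrightarrow> compact (UNIV - Some -` \<Union>\<K>))" by blast
  qed
  then show ?thesis unfolding riemann_sphere_def by simp
qed

lemma topspace_riemann_sphere [simp]: "topspace riemann_sphere = UNIV"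
  using openin_subset[of riemann_sphere UNIV] by (auto simp: openin_riemann_sphere)

lemma openin_riemann_sphere_image_Some: "open V \<Longrightarrow> openin riemann_sphere (Some ` V)"
  by (simp add: openin_riemann_sphere vimage_image_eq inj_on_def)

lemma continuous_map_scaling:
  assumes "u \<noteq> 0"
  shows "continuous_map riemann_sphere riemann_sphere (scaling u)"
  unfolding continuous_map
proof (intro conjI allI impI)
  fix U :: "cpt set"
  assume U: "openin riemann_sphere U"
  have pre: "Some -` {x \<in> topspace riemann_sphere. scaling u x \<in> U} = (\<lambda>z. u * z) -` (Some -` U)"
    by auto
  have "UNIV - (\<lambda>z. u * z) -` (Some -` U) = (\<lambda>z. z / u) ` (UNIV - Some -` U)"
  proof (intro equalityI subsetI)
    fix z
    assume "z \<in> UNIV - (\<lambda>z. u * z) -` (Some -` U)"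
    moreover have "z = u * z / u" using assms by simp
    ultimately show "z \<in> (\<lambda>z. z / u) ` (UNIV - Some -` U)" by blast
  qed (use assms in auto)
  moreover have "continuous_on X (\<lambda>z::complex. z / u)" for X
    using assms by (intro continuous_intros) auto
  ultimately have "None \<in> U \<Longrightarrow> compact (UNIV - (\<lambda>z. u * z) -` (Some -` U))"
    using U by (auto simp: openin_riemann_sphere intro: compact_continuous_image)
  moreover have "open ((\<lambda>z. u * z) -` (Some -` U))"
    using U by (intro continuous_open_vimage continuous_intros) (auto simp: openin_riemann_sphere)
  ultimately show "openin riemann_sphere {x \<in> topspace riemann_sphere. scaling u x \<in> U}"
    unfolding openin_riemann_sphere pre by auto
qed auto

lemma homeomorphic_map_scaling:
  "u \<noteq> 0 \<Longrightarrow> homeomorphic_map riemann_sphere riemann_sphere (scaling u)"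
  by (rule homeomorphic_maps_imp_map[where g = "scaling (1 / u)"])
     (simp add: homeomorphic_maps_def continuous_map_scaling)

lemma frontier_of_image_scaling:
  "u \<noteq> 0 \<Longrightarrow> riemann_sphere frontier_of (scaling u ` S) = scaling u ` (riemann_sphere frontier_of S)"
  by (rule homeomorphic_map_frontier_of[OF homeomorphic_map_scaling]) auto

lemma closed_disc_image_scaling:
  assumes "u \<noteq> 0" "closed_disc D"
  shows "closed_disc (scaling u ` D)"
proof -
  have "homeomorphic_map (subtopology riemann_sphere D) (subtopology riemann_sphere (scaling u ` D)) (scaling u)"
    by (rule homeomorphic_map_subtopologies[OF homeomorphic_map_scaling[OF assms(1)]]) auto
  then show ?thesis
    using assms(2) unfolding closed_disc_def
    by (meson homeomorphic_map_imp_homeomorphic_space homeomorphic_space_sym homeomorphic_space_trans)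
qed

lemma homeomorphic_map_Some: "homeomorphic_map euclidean (subtopology riemann_sphere (range Some)) Some"
proof (rule homeomorphic_maps_imp_map[where g = the], unfold homeomorphic_maps_def, intro conjI)
  show "continuous_map euclidean (subtopology riemann_sphere (range Some)) Some"
    by (rule continuous_map_into_subtopology)
       (auto simp: continuous_map openin_riemann_sphere vimage_def)
  show "continuous_map (subtopology riemann_sphere (range Some)) euclidean the"
    unfolding continuous_map
  proof (intro conjI allI impI)
    fix V :: "complex set"
    assume "openin euclidean V"
    moreover have "{x \<in> topspace (subtopology riemann_sphere (range Some)). the x \<in> V} = Some ` V \<inter> range Some"
      by auto
    ultimately show "openin (subtopology riemann_sphere (range Some))
        {x \<in> topspace (subtopology riemann_sphere (range Some)). the x \<in> V}"
      by (auto simp: openin_subtopology intro!: openin_riemann_sphere_image_Some)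
  qed auto
qed auto

lemma homeomorphic_space_image_Some:
  "top_of_set C homeomorphic_space subtopology riemann_sphere (Some ` C)"
proof -
  have "homeomorphic_map (top_of_set C) (subtopology (subtopology riemann_sphere (range Some)) (Some ` C)) Some"
    by (rule homeomorphic_map_subtopologies[OF homeomorphic_map_Some]) auto
  moreover have "subtopology (subtopology riemann_sphere (range Some)) (Some ` C) = subtopology riemann_sphere (Some ` C)"
    by (simp add: subtopology_subtopology Int_absorb1 image_mono)
  ultimately show ?thesis using homeomorphic_map_imp_homeomorphic_space by metis
qed

lemma frontier_of_image_Some:
  assumes "compact C"
  shows "riemann_sphere frontier_of (Some ` C) = Some ` frontier C"
proof -
  have "closed C" using assms by (rule compact_imp_closed)
  have "Some -` (UNIV - Some ` C) = - C" "UNIV - (- C) = C" by auto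
  then have "closedin riemann_sphere (Some ` C)"
    using \<open>closed C\<close> assms by (auto simp: closedin_def openin_riemann_sphere open_Compl)
  have "riemann_sphere interior_of (Some ` C) = Some ` interior C"
  proof
    show "riemann_sphere interior_of (Some ` C) \<subseteq> Some ` interior C"
    proof
      fix x
      assume "x \<in> riemann_sphere interior_of (Some ` C)"
      then obtain V where V: "openin riemann_sphere V" "x \<in> V" "V \<subseteq> Some ` C"
        by (auto simp: interior_of_def)
      then obtain z where z: "x = Some z" by auto
      have "Some -` V \<subseteq> interior C"
        using V by (intro interior_maximal) (auto simp: openin_riemann_sphere)
      with V z have "z \<in> interior C" by auto
      with z show "x \<in> Some ` interior C" by simp
    qed
    show "Some ` interior C \<subseteq> riemann_sphere interior_of (Some ` C)"
      by (intro interior_of_maximal openin_riemann_sphere_image_Some image_mono interior_subset) simp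
  qed
  then show ?thesis
    unfolding frontier_of_def closure_of_closedin[OF \<open>closedin riemann_sphere (Some ` C)\<close>]
      frontier_def closure_closed[OF \<open>closed C\<close>]
    by (simp add: image_set_diff)
qed

lemma simple_loop_frontier_of_closed_disc:
  assumes D: "closed_disc D" and "None \<notin> D"
  shows "simple_loop (riemann_sphere frontier_of D)"
proof -
  define C where "C = Some -` D"
  have DC: "D = Some ` C"
    unfolding C_def using \<open>None \<notin> D\<close> by (auto simp: image_iff) (metis not_None_eq)
  have "top_of_set C homeomorphic_space top_of_set (cball (0::complex) 1)"
    using homeomorphic_space_trans[OF homeomorphic_space_image_Some[of C]] D
    unfolding closed_disc_def DC by blast
  then have hom: "C homeomorphic cball (0::complex) 1" by simp
  then have "compact C" by (simp add: homeomorphic_compactness)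
  have "frontier C homeomorphic frontier (cball (0::complex) 1)"
    by (rule homeomorphic_frontiers_same_dimension[OF hom]) (auto simp: compact_imp_closed \<open>compact C\<close>)
  then have "top_of_set (frontier C) homeomorphic_space top_of_set (sphere (0::complex) 1)" by simp
  then show ?thesis
    unfolding simple_loop_def DC frontier_of_image_Some[OF \<open>compact C\<close>]
    by (rule homeomorphic_space_trans[OF homeomorphic_space_sym[THEN iffD1, OF homeomorphic_space_image_Some]])
qed

section \<open>Generated groups of Moebius transformations\<close>

lemma mgen_subset_of_left_closed:
  assumes "id \<in> M"
    and "\<And>f h. f \<in> S \<Longrightarrow> h \<in> M \<Longrightarrow> f \<circ> h \<in> M"
    and "\<And>f h. f \<in> S \<Longrightarrow> h \<in> M \<Longrightarrow> inv_into UNIV f \<circ> h \<in> M"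
  shows "mgen S \<subseteq> M"
proof
  fix f
  assume "f \<in> mgen S"
  then have "\<forall>h\<in>M. f \<circ> h \<in> M"
  proof induction
    case (mgen_comp f g)
    then show ?case by (simp add: comp_assoc)
  qed (simp, (blast intro: assms(2,3))+)
  with assms(1) show "f \<in> M" by fastforce
qed

lemma mgen_subset:
  assumes "id \<in> M" "S \<subseteq> M" "\<And>f. f \<in> S \<Longrightarrow> inv_into UNIV f \<in> M"
    and "\<And>f g. f \<in> M \<Longrightarrow> g \<in> M \<Longrightarrow> f \<circ> g \<in> M"
  shows "mgen S \<subseteq> M"
  using assms by (intro mgen_subset_of_left_closed) auto

lemma mgen_mono: "S \<subseteq> S' \<Longrightarrow> mgen S \<subseteq> mgen S'"
  by (rule mgen_subset) (auto intro: mgen.intros)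

lemma funpow_mem_mgen: "f \<in> mgen S \<Longrightarrow> f ^^ j \<in> mgen S"
  by (induction j) (auto intro: mgen.intros simp del: funpow.simps(2) simp: funpow_Suc_right)

lemma bij_of_mem_mgen:
  assumes "\<And>s. s \<in> S \<Longrightarrow> bij s" "f \<in> mgen S"
  shows "bij f"
  using assms(2) by induction (blast intro: assms(1) bij_id bij_comp bij_imp_bij_inv)+

lemma inv_into_mem_mgen:
  assumes "\<And>s. s \<in> S \<Longrightarrow> bij s" "f \<in> mgen S"
  shows "inv_into UNIV f \<in> mgen S"
  using assms(2)
proof induction
  case mgen_id
  show ?case unfolding inv_id by (rule mgen.mgen_id)
next
  case (mgen_inv f)
  then show ?case unfolding inv_inv_eq[OF assms(1)[OF mgen_inv]] by (rule mgen.mgen_gen)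
next
  case (mgen_comp f g)
  have "bij f" "bij g" using bij_of_mem_mgen[OF assms(1)] mgen_comp.hyps by blast+
  then have "inv_into UNIV (f \<circ> g) = inv_into UNIV g \<circ> inv_into UNIV f" by (rule o_inv_distrib)
  with mgen_comp.IH show ?case by (metis mgen.mgen_comp)
qed (rule mgen.mgen_inv)

lemma precisely_invariant_disjoint:
  "precisely_invariant D H G \<Longrightarrow> h \<in> G - H \<Longrightarrow> h ` D \<inter> D = {}"
  unfolding precisely_invariant_def by simp

lemma kleinian_subgroup:
  assumes "kleinian K" "H \<subseteq> K" "id \<in> H"
    and "\<And>f g. f \<in> H \<Longrightarrow> g \<in> H \<Longrightarrow> f \<circ> g \<in> H" "\<And>f. f \<in> H \<Longrightarrow> inv_into UNIV f \<in> H"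
  shows "kleinian H"
  using assms unfolding kleinian_def by (meson subsetD)

lemma group_moeb_group:
  assumes "kleinian K"
  shows "group (moeb_group K)"
proof -
  have K: "id \<in> K" "\<And>f g. f \<in> K \<Longrightarrow> g \<in> K \<Longrightarrow> f \<circ> g \<in> K"
    "\<And>f. f \<in> K \<Longrightarrow> inv_into UNIV f \<in> K" "\<And>f. f \<in> K \<Longrightarrow> bij f"
    using assms bij_moebius unfolding kleinian_def by blast+
  show ?thesis
  proof (rule groupI)
    fix f
    assume "f \<in> carrier (moeb_group K)"
    with K have "inv_into UNIV f \<in> carrier (moeb_group K)"
      "inv_into UNIV f \<otimes>\<^bsub>moeb_group K\<^esub> f = \<one>\<^bsub>moeb_group K\<^esub>"
      by (simp_all add: moeb_group_def bij_is_inj)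
    then show "\<exists>g\<in>carrier (moeb_group K). g \<otimes>\<^bsub>moeb_group K\<^esub> f = \<one>\<^bsub>moeb_group K\<^esub>"
      by blast
  qed (simp_all add: moeb_group_def K comp_assoc)
qed

lemma inv_moeb_group:
  assumes "kleinian K" "f \<in> K"
  shows "inv\<^bsub>moeb_group K\<^esub> f = inv_into UNIV f"
proof -
  have "bij f" "inv_into UNIV f \<in> K"
    using assms bij_moebius by (auto simp: kleinian_def)
  then show ?thesis
    using group.inv_equality[OF group_moeb_group[OF assms(1)]] assms(2)
    by (simp add: moeb_group_def bij_is_inj)
qed

lemma subgroup_moeb_group:
  assumes "kleinian K" "H \<subseteq> K" "id \<in> H"
    and "\<And>f g. f \<in> H \<Longrightarrow> g \<in> H \<Longrightarrow> f \<circ> g \<in> H" "\<And>f. f \<in> H \<Longrightarrow> inv_into UNIV f \<in> H"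
  shows "subgroup H (moeb_group K)"
  using assms inv_moeb_group[OF assms(1)]
  by (intro group.subgroupI[OF group_moeb_group[OF assms(1)]]) (auto simp: moeb_group_def)

lemma (in group) card_rcosets_eq_card_transversal:
  assumes H: "subgroup H G" and R: "R \<subseteq> carrier G"
    and cover: "\<And>k. k \<in> carrier G \<Longrightarrow> \<exists>h\<in>H. \<exists>r\<in>R. k = h \<otimes> r"
    and separate: "\<And>h r r'. h \<in> H \<Longrightarrow> r \<in> R \<Longrightarrow> r' \<in> R \<Longrightarrow> r = h \<otimes> r' \<Longrightarrow> r = r'"
  shows "card (rcosets H) = card R"
proof -
  have "rcosets H = (\<lambda>r. H #> r) ` R"
  proof
    show "rcosets H \<subseteq> (\<lambda>r. H #> r) ` R"
    proof
      fix C
      assume "C \<in> rcosets H"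
      then obtain k where k: "k \<in> carrier G" "C = H #> k" unfolding RCOSETS_def by auto
      then obtain h r where hr: "h \<in> H" "r \<in> R" "k = h \<otimes> r" using cover by blast
      then have "H #> k = (H #> h) #> r"
        using H R subgroup.mem_carrier[OF H] by (simp add: coset_mult_assoc subgroup.subset subsetD)
      also have "H #> h = H" using subgroup.rcos_const[OF H is_group hr(1)] .
      finally show "C \<in> (\<lambda>r. H #> r) ` R" using k hr by auto
    qed
    show "(\<lambda>r. H #> r) ` R \<subseteq> rcosets H" using R unfolding RCOSETS_def by auto
  qed
  moreover have "inj_on (\<lambda>r. H #> r) R"
  proof (rule inj_onI)
    fix r r'
    assume rr: "r \<in> R" "r' \<in> R" "H #> r = H #> r'"
    then have "r \<in> H #> r'" using rcos_self[OF _ H] R by auto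
    then obtain h where "h \<in> H" "r = h \<otimes> r'" unfolding r_coset_def by auto
    with rr separate show "r = r'" by blast
  qed
  ultimately show ?thesis by (simp add: card_image)
qed

section \<open>Reduced words and the ping-pong lemma\<close>

text \<open>A letter \<open>(i, True)\<close> stands for the generator \<open>g i\<close>, and \<open>(i, False)\<close> for its inverse.\<close>

type_synonym 'i letter = "'i \<times> bool"

definition inverse_letter :: "'i letter \<Rightarrow> 'i letter" where
  "inverse_letter l = (fst l, \<not> snd l)"

fun reduced_word :: "'i letter list \<Rightarrow> bool" where
  "reduced_word (l # l' # ws) \<longleftrightarrow> l' \<noteq> inverse_letter l \<and> reduced_word (l' # ws)"
| "reduced_word _ \<longleftrightarrow> True"

definition cons_reduce :: "'i letter \<Rightarrow> 'i letter list \<Rightarrow> 'i letter list" where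
  "cons_reduce l ws = (case ws of [] \<Rightarrow> [l] | l' # ws' \<Rightarrow> if l' = inverse_letter l then ws' else l # ws)"

definition eval_letter :: "('i \<Rightarrow> 'a \<Rightarrow> 'a) \<Rightarrow> 'i letter \<Rightarrow> 'a \<Rightarrow> 'a" where
  "eval_letter g l = (if snd l then g (fst l) else inv_into UNIV (g (fst l)))"

definition eval_word :: "('i \<Rightarrow> 'a \<Rightarrow> 'a) \<Rightarrow> 'i letter list \<Rightarrow> 'a \<Rightarrow> 'a" where
  "eval_word g ws = foldr (\<lambda>l f. eval_letter g l \<circ> f) ws id"

lemma eval_word_Nil [simp]: "eval_word g [] = id"
  and eval_word_Cons [simp]: "eval_word g (l # ws) = eval_letter g l \<circ> eval_word g ws"
  by (simp_all add: eval_word_def)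

lemma reduced_word_tl: "reduced_word (l # ws) \<Longrightarrow> reduced_word ws"
  by (cases ws) auto

lemma reduced_word_cons_reduce: "reduced_word ws \<Longrightarrow> reduced_word (cons_reduce l ws)"
  by (cases ws) (auto simp: cons_reduce_def inverse_letter_def intro: reduced_word_tl)

lemma letters_cons_reduce: "fst ` set (cons_reduce l ws) \<subseteq> insert (fst l) (fst ` set ws)"
  by (cases ws) (auto simp: cons_reduce_def)

lemma eval_word_cons_reduce:
  assumes "bij (g (fst l))"
  shows "eval_word g (cons_reduce l ws) = eval_letter g l \<circ> eval_word g ws"
proof (cases ws)
  case (Cons l' ws')
  have "eval_letter g l \<circ> eval_letter g (inverse_letter l) = id"
    using assms surj_iff[THEN iffD1, OF bij_is_surj[OF assms]]
    by (simp add: eval_letter_def inverse_letter_def bij_is_inj inv_o_cancel)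
  with Cons show ?thesis
    by (auto simp: cons_reduce_def comp_assoc[symmetric])
qed (simp add: cons_reduce_def)

lemma reduced_word_foldr_cons_reduce:
  assumes "reduced_word ws'"
  shows "reduced_word (foldr cons_reduce ws ws')"
  using assms by (induction ws) (simp_all add: reduced_word_cons_reduce)

lemma letters_foldr_cons_reduce:
  "fst ` set (foldr cons_reduce ws ws') \<subseteq> fst ` set ws \<union> fst ` set ws'"
proof (induction ws)
  case (Cons l ws)
  then have "fst ` set (cons_reduce l (foldr cons_reduce ws ws')) \<subseteq> insert (fst l) (fst ` set ws \<union> fst ` set ws')"
    using letters_cons_reduce[of l "foldr cons_reduce ws ws'"] by blast
  then show ?case by (simp add: image_Un)
qed simp

lemma eval_word_foldr_cons_reduce:
  assumes "\<And>l. l \<in> set ws \<Longrightarrow> bij (g (fst l))"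
  shows "eval_word g (foldr cons_reduce ws ws') = eval_word g ws \<circ> eval_word g ws'"
  using assms by (induction ws) (simp_all add: eval_word_cons_reduce comp_assoc)

lemma mem_mgen_eval_reduced_word:
  assumes bij: "\<And>i. i \<in> I \<Longrightarrow> bij (g i)" and "f \<in> mgen (g ` I)"
  shows "\<exists>ws. reduced_word ws \<and> fst ` set ws \<subseteq> I \<and> f = eval_word g ws"
  using assms(2)
proof induction
  case mgen_id
  show ?case by (intro exI[of _ "[]"]) simp
next
  case (mgen_gen f)
  then obtain i where "i \<in> I" "f = g i" by blast
  then show ?case by (intro exI[of _ "[(i, True)]"]) (simp add: eval_letter_def)
next
  case (mgen_inv f)
  then obtain i where "i \<in> I" "f = g i" by blast
  then show ?case by (intro exI[of _ "[(i, False)]"]) (simp add: eval_letter_def)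
next
  case (mgen_comp f f')
  obtain ws where f: "f = eval_word g ws" and ws: "fst ` set ws \<subseteq> I"
    using mgen_comp.IH(1) by auto
  obtain ws' where f': "f' = eval_word g ws'" and ws': "reduced_word ws'" "fst ` set ws' \<subseteq> I"
    using mgen_comp.IH(2) by auto
  define vs where "vs = foldr cons_reduce ws ws'"
  have "reduced_word vs" unfolding vs_def using ws'(1) by (rule reduced_word_foldr_cons_reduce)
  moreover have "fst ` set vs \<subseteq> I"
    unfolding vs_def using letters_foldr_cons_reduce[of ws ws'] ws ws'(2) by blast
  moreover have "f \<circ> f' = eval_word g vs"
    unfolding vs_def f f' by (rule eval_word_foldr_cons_reduce[symmetric]) (use ws bij in auto)
  ultimately show ?case by (intro exI[of _ vs]) simp
qed

locale ping_pong =
  fixes I :: "'i set" and g :: "'i \<Rightarrow> 'a \<Rightarrow> 'a" and E E' :: "'i \<Rightarrow> 'a set"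
  assumes bij: "i \<in> I \<Longrightarrow> bij (g i)"
    and maps_outside_into: "i \<in> I \<Longrightarrow> x \<notin> E i \<Longrightarrow> g i x \<in> E' i"
    and E_E'_disjoint: "i \<in> I \<Longrightarrow> j \<in> I \<Longrightarrow> E i \<inter> E' j = {}"
    and E_disjoint: "i \<in> I \<Longrightarrow> j \<in> I \<Longrightarrow> i \<noteq> j \<Longrightarrow> E i \<inter> E j = {}"
    and E'_disjoint: "i \<in> I \<Longrightarrow> j \<in> I \<Longrightarrow> i \<noteq> j \<Longrightarrow> E' i \<inter> E' j = {}"
begin

definition source :: "'i letter \<Rightarrow> 'a set" where
  "source l = (if snd l then E (fst l) else E' (fst l))"

definition target :: "'i letter \<Rightarrow> 'a set" where
  "target l = (if snd l then E' (fst l) else E (fst l))"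

lemma inv_maps_outside_into:
  assumes "i \<in> I" "x \<notin> E' i"
  shows "inv_into UNIV (g i) x \<in> E i"
  using assms maps_outside_into[of i "inv_into UNIV (g i) x"] bij[of i]
  by (auto simp: bij_is_surj surj_f_inv_f)

lemma eval_letter_into_target: "fst l \<in> I \<Longrightarrow> x \<notin> source l \<Longrightarrow> eval_letter g l x \<in> target l"
  by (auto simp: eval_letter_def source_def target_def maps_outside_into inv_maps_outside_into)

lemma target_source_disjoint:
  assumes "fst l \<in> I" "fst l' \<in> I" "l' \<noteq> inverse_letter l"
  shows "target l' \<inter> source l = {}"
proof -
  obtain i b j c where l: "l = (i, b)" "l' = (j, c)" by fastforce
  with assms have "i \<in> I" "j \<in> I" "(j, c) \<noteq> (i, \<not> b)" by (auto simp: inverse_letter_def)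
  then show ?thesis
    using E_E'_disjoint[of i j] E_E'_disjoint[of j i] E_disjoint[of j i] E'_disjoint[of j i]
    by (cases b; cases c) (auto simp: l target_def source_def)
qed

lemma eval_reduced_word_into_target:
  "reduced_word ws \<Longrightarrow> ws \<noteq> [] \<Longrightarrow> fst ` set ws \<subseteq> I \<Longrightarrow> x \<notin> source (last ws) \<Longrightarrow>
    eval_word g ws x \<in> target (hd ws)"
proof (induction ws rule: reduced_word.induct)
  case (1 l l' ws)
  then have "eval_word g (l' # ws) x \<in> target l'" by simp
  moreover have "target l' \<inter> source l = {}"
    using 1 by (intro target_source_disjoint) auto
  ultimately have "eval_word g (l' # ws) x \<notin> source l" by blast
  with 1 show ?case by (simp add: eval_letter_into_target)
qed (simp_all add: eval_letter_into_target)

lemma eval_reduced_word_eq_id: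
  assumes "reduced_word ws" "fst ` set ws \<subseteq> I"
    and "x \<notin> (\<Union>i\<in>I. E i \<union> E' i)" "eval_word g ws x \<notin> (\<Union>i\<in>I. E i \<union> E' i)"
  shows "eval_word g ws = id"
proof (rule ccontr)
  assume "eval_word g ws \<noteq> id"
  then have "ws \<noteq> []" by auto
  with assms(2) have I: "fst (hd ws) \<in> I" "fst (last ws) \<in> I" by auto
  with assms(3) have "x \<notin> source (last ws)" by (auto simp: source_def)
  then have "eval_word g ws x \<in> target (hd ws)"
    by (rule eval_reduced_word_into_target[OF assms(1) \<open>ws \<noteq> []\<close> assms(2)])
  with I assms(4) show False by (auto simp: target_def split: if_splits)
qed

end

lemma ping_pong_mgen_eq_id:
  assumes "ping_pong I g E E'" "f \<in> mgen (g ` I)"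
    and "x \<notin> (\<Union>i\<in>I. E i \<union> E' i)" "f x \<notin> (\<Union>i\<in>I. E i \<union> E' i)"
  shows "f = id"
  using mem_mgen_eval_reduced_word[OF ping_pong.bij[OF assms(1)] assms(2)]
    ping_pong.eval_reduced_word_eq_id[OF assms(1)] assms(3,4) by blast

section \<open>The HNN-extension of the dihedral group\<close>

locale dihedral_hnn =
  fixes n :: nat and A B T :: "cpt \<Rightarrow> cpt" and D1 D2 :: "cpt set"
  assumes n_ge_2: "n \<ge> 2"
    and A_def: "A = moeb (exp (2 * pi * \<i> / of_nat n)) 0 0 1"
    and B_def: "B = moeb 0 1 1 0"
    and T_lox: "loxodromic T"
    and T_conj: "T \<circ> B \<circ> inv_into UNIV T = A \<circ> B"
    and D1_disc: "closed_disc D1" and D2_disc: "closed_disc D2"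
    and sep: "\<forall>h\<in>mgen {A, B}. h ` D1 \<inter> D2 = {}"
    and pi1: "precisely_invariant D1 (mgen {B}) (mgen {A, B})"
    and pi2: "precisely_invariant D2 (mgen {A \<circ> B}) (mgen {A, B})"
    and T_bdry: "T ` (riemann_sphere frontier_of D1) = riemann_sphere frontier_of D2"
    and T_ext: "T ` (UNIV - D1) = riemann_sphere interior_of D2"
    and K_kleinian: "kleinian (mgen {A, B, T})"
begin

definition \<omega> :: complex where
  "\<omega> = exp (2 * pi * \<i> / of_nat n)"

definition roots :: "complex set" where
  "roots = {z. z ^ n = 1}"

lemma omega_power: "\<omega> ^ j = exp (2 * of_real pi * \<i> * of_nat j / of_nat n)"
proof -
  have "\<omega> ^ j = exp (of_nat j * (2 * pi * \<i> / of_nat n))"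
    by (simp add: \<omega>_def exp_of_nat_mult[symmetric])
  then show ?thesis by (simp add: field_simps)
qed

lemma omega_power_eq_1_iff: "\<omega> ^ j = 1 \<longleftrightarrow> n dvd j"
  using complex_root_unity_eq_1[of n j] n_ge_2 by (simp add: omega_power)

lemma omega_power_inj: "i < n \<Longrightarrow> j < n \<Longrightarrow> \<omega> ^ i = \<omega> ^ j \<Longrightarrow> i = j"
  using complex_root_unity_eq[of n i j] n_ge_2 by (simp add: omega_power)

lemma omega_nonzero: "\<omega> \<noteq> 0"
  by (simp add: \<omega>_def)

lemma omega_neq_1: "\<omega> \<noteq> 1"
  using omega_power_eq_1_iff[of 1] n_ge_2 by auto

lemma roots_eq: "roots = {\<omega> ^ j | j. j < n}"
  using complex_roots_unity[of n] n_ge_2 by (simp add: roots_def omega_power)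

lemma card_roots: "card roots = n"
  using card_complex_roots_unity[of n] n_ge_2 by (simp add: roots_def)

lemma roots_nonzero: "u \<in> roots \<Longrightarrow> u \<noteq> 0"
  using n_ge_2 by (auto simp: roots_def power_0_left)

lemma roots_mult: "u \<in> roots \<Longrightarrow> v \<in> roots \<Longrightarrow> u * v \<in> roots"
  by (simp add: roots_def power_mult_distrib)

lemma roots_divide: "u \<in> roots \<Longrightarrow> v \<in> roots \<Longrightarrow> u / v \<in> roots"
  by (simp add: roots_def power_divide)

lemma omega_power_in_roots: "\<omega> ^ j \<in> roots"
  by (simp add: roots_def omega_power_eq_1_iff flip: power_mult)

lemma A_eq: "A = scaling \<omega>"
  by (simp add: A_def \<omega>_def scaling_def)

lemma funpow_A: "A ^^ j = scaling (\<omega> ^ j)"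
  by (induction j) (simp_all add: A_eq fun_eq_iff)

lemma B_B [simp]: "B (B x) = x"
  by (cases x) (simp_all add: B_def moeb_def)

lemma B_None [simp]: "B None = Some 0"
  and B_Some_0 [simp]: "B (Some 0) = None"
  by (simp_all add: B_def moeb_def)

lemma B_scaling: "u \<noteq> 0 \<Longrightarrow> B (scaling u x) = scaling (1 / u) (B x)"
  by (cases x) (simp_all add: B_def moeb_def)

lemma B_comp_B: "B \<circ> B = id"
  by (simp add: fun_eq_iff)

lemma inv_into_B: "inv_into UNIV B = B"
  by (rule inv_unique_comp) (simp_all add: B_comp_B)

lemma bij_T: "bij T"
  using bij_moebius[OF loxodromic_imp_moebius[OF T_lox]] .

lemma T_inv_T [simp]: "T (inv_into UNIV T x) = x"
  and inv_T_T [simp]: "inv_into UNIV T (T x) = x"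
  using bij_T by (simp_all add: bij_is_surj bij_is_inj surj_f_inv_f)

lemma T_B: "T (B x) = scaling \<omega> (B (T x))"
  using fun_cong[OF T_conj, of "T x"] by (simp add: A_eq)

lemma B_T: "B (T x) = scaling (1 / \<omega>) (T (B x))"
  using arg_cong[OF T_B[of "B x"], of B] by (simp add: B_scaling omega_nonzero)

lemma B_inv_T: "B (inv_into UNIV T x) = inv_into UNIV T (scaling \<omega> (B x))"
  using arg_cong[OF T_B[of "inv_into UNIV T x"], of "inv_into UNIV T"] by simp

definition Dn :: "(cpt \<Rightarrow> cpt) set" where
  "Dn = scaling ` roots \<union> (\<lambda>u. scaling u \<circ> B) ` roots"

lemma Dn_iff: "d \<in> Dn \<longleftrightarrow> (\<exists>u\<in>roots. d = scaling u \<or> d = scaling u \<circ> B)"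
  unfolding Dn_def by blast

lemma scaling_in_Dn: "u \<in> roots \<Longrightarrow> scaling u \<in> Dn"
  and scaling_comp_B_in_Dn: "u \<in> roots \<Longrightarrow> scaling u \<circ> B \<in> Dn"
  unfolding Dn_def by blast+

lemma one_in_roots: "1 \<in> roots"
  by (simp add: roots_def)

lemma id_in_Dn: "id \<in> Dn"
  using scaling_in_Dn[OF one_in_roots] by simp

lemma B_in_Dn: "B \<in> Dn"
  using scaling_comp_B_in_Dn[OF one_in_roots] by simp

lemma A_in_Dn: "A \<in> Dn"
  using scaling_in_Dn omega_power_in_roots[of 1] by (simp add: A_eq)

lemma Dn_comp:
  assumes "d \<in> Dn" "d' \<in> Dn"
  shows "d \<circ> d' \<in> Dn"
proof -
  obtain u v where uv: "u \<in> roots" "v \<in> roots"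
    and d: "d = scaling u \<or> d = scaling u \<circ> B" and d': "d' = scaling v \<or> d' = scaling v \<circ> B"
    using assms unfolding Dn_iff by blast
  have "v \<noteq> 0" using uv roots_nonzero by blast
  then have eqs: "scaling u \<circ> scaling v = scaling (u * v)"
    "scaling u \<circ> (scaling v \<circ> B) = scaling (u * v) \<circ> B"
    "(scaling u \<circ> B) \<circ> scaling v = scaling (u / v) \<circ> B"
    "(scaling u \<circ> B) \<circ> (scaling v \<circ> B) = scaling (u / v)"
    by (simp_all add: fun_eq_iff B_scaling)
  have "u * v \<in> roots" "u / v \<in> roots" using uv roots_mult roots_divide by blast+
  with d d' show ?thesis
    by (elim disjE) (simp_all only: eqs scaling_in_Dn scaling_comp_B_in_Dn)
qed

lemma scaling_mem_mgen_AB: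
  assumes "u \<in> roots"
  shows "scaling u \<in> mgen {A, B}"
proof -
  obtain j where "u = \<omega> ^ j" using assms roots_eq by blast
  then have "scaling u = A ^^ j" by (simp add: funpow_A)
  then show ?thesis using funpow_mem_mgen[OF mgen.mgen_gen[of A "{A, B}"]] by simp
qed

lemma mgen_AB_eq_Dn: "mgen {A, B} = Dn"
proof
  have omega: "\<omega> \<in> roots" "1 / \<omega> \<in> roots"
    using roots_divide[OF one_in_roots] omega_power_in_roots[of 1] by auto
  show "mgen {A, B} \<subseteq> Dn"
  proof (rule mgen_subset)
    show "{A, B} \<subseteq> Dn" using scaling_in_Dn[OF omega(1)] B_in_Dn by (simp add: A_eq)
    have "inv_into UNIV A = scaling (1 / \<omega>)"
      by (simp add: A_eq inv_into_scaling omega_nonzero)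
    then show "inv_into UNIV f \<in> Dn" if "f \<in> {A, B}" for f
      using that scaling_in_Dn[OF omega(2)] B_in_Dn by (auto simp: inv_into_B)
  qed (use id_in_Dn Dn_comp in auto)
  show "Dn \<subseteq> mgen {A, B}"
  proof
    fix d
    assume "d \<in> Dn"
    then obtain u where "u \<in> roots" "d = scaling u \<or> d = scaling u \<circ> B" unfolding Dn_iff by blast
    with scaling_mem_mgen_AB mgen.mgen_comp mgen.mgen_gen[of B "{A, B}"] show "d \<in> mgen {A, B}"
      by blast
  qed
qed

lemma mgen_B_subset: "mgen {B} \<subseteq> {id, B}"
  by (rule mgen_subset) (auto simp: inv_into_B B_comp_B)

lemma mgen_comp_AB_subset: "mgen {A \<circ> B} \<subseteq> {id, A \<circ> B}"
proof -
  have AB: "(A \<circ> B) \<circ> (A \<circ> B) = id"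
    by (simp add: fun_eq_iff A_eq B_scaling omega_nonzero)
  then have "inv_into UNIV (A \<circ> B) = A \<circ> B" by (rule inv_unique_comp[OF AB])
  with AB show ?thesis by (intro mgen_subset) auto
qed

lemma scaling_not_in_stabilizers:
  assumes "u \<in> roots" "u \<noteq> 1"
  shows "scaling u \<in> mgen {A, B} - mgen {B}" "scaling u \<in> mgen {A, B} - mgen {A \<circ> B}"
proof -
  have "scaling u \<noteq> id" using assms(2) scaling_inj[of u 1] by auto
  moreover have "scaling u None \<noteq> B None" "scaling u None \<noteq> (A \<circ> B) None"
    by (simp_all add: A_eq)
  then have "scaling u \<noteq> B" "scaling u \<noteq> A \<circ> B" by metis+
  ultimately show "scaling u \<in> mgen {A, B} - mgen {B}" "scaling u \<in> mgen {A, B} - mgen {A \<circ> B}"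
    using scaling_mem_mgen_AB[OF assms(1)] mgen_B_subset mgen_comp_AB_subset by blast+
qed

lemma scaling_D1_D2_disjoint:
  assumes "u \<in> roots" "v \<in> roots"
  shows "scaling u ` D1 \<inter> scaling v ` D2 = {}"
proof (rule image_scaling_Int)
  show "scaling (u / v) ` D1 \<inter> D2 = {}"
    using sep scaling_mem_mgen_AB[OF roots_divide[OF assms]] by blast
qed (use assms roots_nonzero in auto)

lemma scaling_D1_disjoint:
  assumes "u \<in> roots" "v \<in> roots" "u \<noteq> v"
  shows "scaling u ` D1 \<inter> scaling v ` D1 = {}"
proof (rule image_scaling_Int)
  have "u / v \<noteq> 1" using assms roots_nonzero by auto
  then show "scaling (u / v) ` D1 \<inter> D1 = {}"
    using precisely_invariant_disjoint[OF pi1] scaling_not_in_stabilizers(1)[OF roots_divide[OF assms(1,2)]]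
    by blast
qed (use assms roots_nonzero in auto)

lemma scaling_D2_disjoint:
  assumes "u \<in> roots" "v \<in> roots" "u \<noteq> v"
  shows "scaling u ` D2 \<inter> scaling v ` D2 = {}"
proof (rule image_scaling_Int)
  have "u / v \<noteq> 1" using assms roots_nonzero by auto
  then show "scaling (u / v) ` D2 \<inter> D2 = {}"
    using precisely_invariant_disjoint[OF pi2] scaling_not_in_stabilizers(2)[OF roots_divide[OF assms(1,2)]]
    by blast
qed (use assms roots_nonzero in auto)

lemma zero_infinity_notin_D:
  assumes "p \<in> {None, Some 0}"
  shows "p \<notin> D1" "p \<notin> D2"
proof -
  have omega: "\<omega> \<in> roots" using omega_power_in_roots[of 1] by simp
  have "scaling \<omega> p = p" using assms by auto
  then have "p \<in> scaling \<omega> ` D" if "p \<in> D" for D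
    using that by (metis image_eqI)
  moreover have "scaling \<omega> ` D1 \<inter> D1 = {}" "scaling \<omega> ` D2 \<inter> D2 = {}"
    using precisely_invariant_disjoint[OF pi1 scaling_not_in_stabilizers(1)[OF omega omega_neq_1]]
      precisely_invariant_disjoint[OF pi2 scaling_not_in_stabilizers(2)[OF omega omega_neq_1]] .
  ultimately show "p \<notin> D1" "p \<notin> D2" by (metis IntI emptyE)+
qed

lemma zero_infinity_notin_image_scaling:
  assumes "p \<in> {None, Some 0}" "u \<noteq> 0"
  shows "p \<notin> scaling u ` D1" "p \<notin> scaling u ` D2"
proof -
  have "x = p" if "scaling u x = p" for x
    using assms that by (cases x) auto
  then show "p \<notin> scaling u ` D1" "p \<notin> scaling u ` D2"
    using zero_infinity_notin_D[OF assms(1)] by (metis imageE)+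
qed

lemma Dn_zero_infinity:
  assumes "d \<in> Dn" "p \<in> {None, Some 0}"
  shows "d p \<in> {None, Some 0}"
proof -
  obtain u where "d = scaling u \<or> d = scaling u \<circ> B" using assms(1) unfolding Dn_iff by blast
  with assms(2) show ?thesis by auto
qed

definition K :: "(cpt \<Rightarrow> cpt) set" where
  "K = mgen {A, B, T}"

definition \<Gamma> :: "(cpt \<Rightarrow> cpt) set" where
  "\<Gamma> = mgen {(A ^^ j) \<circ> T \<circ> inv_into UNIV (A ^^ j) | j. j < n}"

lemma generator_eq: "(A ^^ j) \<circ> T \<circ> inv_into UNIV (A ^^ j) = scaling_conj (\<omega> ^ j) T"
  by (simp add: funpow_A inv_into_scaling omega_nonzero scaling_conj_def)

lemma Gamma_eq: "\<Gamma> = mgen ((\<lambda>u. scaling_conj u T) ` roots)"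
  unfolding \<Gamma>_def generator_eq roots_eq by (rule arg_cong[where f = mgen]) blast

lemma bij_scaling_conj_T: "u \<in> roots \<Longrightarrow> bij (scaling_conj u T)"
  by (rule bij_scaling_conj[OF bij_T roots_nonzero])

lemma T_maps_outside_D1_into_D2: "x \<notin> D1 \<Longrightarrow> T x \<in> D2"
  using T_ext interior_of_subset[of riemann_sphere D2] by blast

lemma ping_pong_Gamma:
  "ping_pong roots (\<lambda>u. scaling_conj u T) (\<lambda>u. scaling u ` D1) (\<lambda>u. scaling u ` D2)"
proof
  fix u x
  assume u: "u \<in> roots" and x: "x \<notin> scaling u ` D1"
  have "x = scaling u (scaling (1 / u) x)" using u roots_nonzero by simp
  from image_eqI[of x "scaling u" "scaling (1 / u) x" D1, OF this] x
  have "scaling (1 / u) x \<notin> D1" by blast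
  then show "scaling_conj u T x \<in> scaling u ` D2"
    unfolding scaling_conj_apply by (intro imageI T_maps_outside_D1_into_D2)
next
  show "bij (scaling_conj u T)" if "u \<in> roots" for u
    using that by (rule bij_scaling_conj_T)
qed (fact scaling_D1_D2_disjoint scaling_D1_disjoint scaling_D2_disjoint)+

lemma Gamma_eq_id:
  assumes "\<gamma> \<in> \<Gamma>" "p \<in> {None, Some 0}" "\<gamma> p \<in> {None, Some 0}"
  shows "\<gamma> = id"
proof (rule ping_pong_mgen_eq_id[OF ping_pong_Gamma])
  show "\<gamma> \<in> mgen ((\<lambda>u. scaling_conj u T) ` roots)" using assms(1) Gamma_eq by simp
  show "p \<notin> (\<Union>u\<in>roots. scaling u ` D1 \<union> scaling u ` D2)" "\<gamma> p \<notin> (\<Union>u\<in>roots. scaling u ` D1 \<union> scaling u ` D2)"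
    using zero_infinity_notin_image_scaling[OF assms(2)] zero_infinity_notin_image_scaling[OF assms(3)]
      roots_nonzero by blast+
qed

lemma id_in_Gamma: "id \<in> \<Gamma>"
  unfolding \<Gamma>_def by (rule mgen_id)

lemma Gamma_comp: "f \<in> \<Gamma> \<Longrightarrow> g \<in> \<Gamma> \<Longrightarrow> f \<circ> g \<in> \<Gamma>"
  unfolding \<Gamma>_def by (rule mgen_comp)

lemma Gamma_inv: "f \<in> \<Gamma> \<Longrightarrow> inv_into UNIV f \<in> \<Gamma>"
  unfolding Gamma_eq by (rule inv_into_mem_mgen) (auto simp: bij_scaling_conj_T)

lemma scaling_conj_T_in_Gamma: "u \<in> roots \<Longrightarrow> scaling_conj u T \<in> \<Gamma>"
  unfolding Gamma_eq by (rule mgen_gen) simp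

lemma scaling_conj_inv_T_in_Gamma: "u \<in> roots \<Longrightarrow> scaling_conj u (inv_into UNIV T) \<in> \<Gamma>"
  using Gamma_inv[OF scaling_conj_T_in_Gamma]
  by (simp add: inv_into_scaling_conj bij_T roots_nonzero)

lemma T_in_Gamma: "T \<in> \<Gamma>"
  using scaling_conj_T_in_Gamma[OF one_in_roots] by simp

lemma kleinian_K: "kleinian K"
  using K_kleinian by (simp add: K_def)

lemma K_closed: "id \<in> K" "f \<in> K \<Longrightarrow> g \<in> K \<Longrightarrow> f \<circ> g \<in> K" "f \<in> K \<Longrightarrow> inv_into UNIV f \<in> K"
  using kleinian_K by (simp_all add: kleinian_def)

lemma T_in_K: "T \<in> K"
  unfolding K_def by (rule mgen_gen) simp

lemma Dn_subset_K: "Dn \<subseteq> K"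
  unfolding K_def mgen_AB_eq_Dn[symmetric] by (rule mgen_mono) auto

lemma Gamma_subset_K: "\<Gamma> \<subseteq> K"
proof -
  have "scaling_conj u T \<in> K" if "u \<in> roots" for u
  proof -
    have "scaling u \<in> K" "scaling (1 / u) \<in> K"
      using that Dn_subset_K scaling_in_Dn roots_divide[OF one_in_roots] by auto
    then show ?thesis unfolding scaling_conj_def using K_closed(2) T_in_K by blast
  qed
  then show ?thesis
    unfolding Gamma_eq using K_closed by (intro mgen_subset) auto
qed

lemma subgroup_Gamma: "subgroup \<Gamma> (moeb_group K)"
  using Gamma_subset_K Gamma_comp Gamma_inv mgen_id
  by (intro subgroup_moeb_group[OF kleinian_K]) (auto simp: \<Gamma>_def)

lemma kleinian_Gamma: "kleinian \<Gamma>"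
  using Gamma_subset_K Gamma_comp Gamma_inv mgen_id
  by (intro kleinian_subgroup[OF kleinian_K]) (auto simp: \<Gamma>_def)

lemma B_comp_scaling_conj_T:
  "u \<noteq> 0 \<Longrightarrow> v \<noteq> 0 \<Longrightarrow>
    (scaling v \<circ> B) \<circ> scaling_conj u T = scaling_conj (v / (u * \<omega>)) T \<circ> (scaling (v / \<omega>) \<circ> B)"
  using omega_nonzero by (intro ext) (simp add: scaling_conj_apply B_scaling B_T field_simps)

lemma B_comp_scaling_conj_inv_T:
  "u \<noteq> 0 \<Longrightarrow> v \<noteq> 0 \<Longrightarrow>
    (scaling v \<circ> B) \<circ> scaling_conj u (inv_into UNIV T) =
      scaling_conj (v / u) (inv_into UNIV T) \<circ> (scaling (v * \<omega>) \<circ> B)"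
  using omega_nonzero by (intro ext) (simp add: scaling_conj_apply B_scaling B_inv_T field_simps)

lemma Dn_comp_generator:
  assumes "d \<in> Dn" "u \<in> roots" "f \<in> {T, inv_into UNIV T}"
  shows "\<exists>u'\<in>roots. \<exists>d'\<in>Dn. d \<circ> scaling_conj u f = scaling_conj u' f \<circ> d'"
proof -
  obtain v where v: "v \<in> roots" "d = scaling v \<or> d = scaling v \<circ> B"
    using assms(1) unfolding Dn_iff by blast
  have nz: "u \<noteq> 0" "v \<noteq> 0" using assms(2) v(1) roots_nonzero by auto
  have omega: "\<omega> \<in> roots" using omega_power_in_roots[of 1] by simp
  from v(2) show ?thesis
  proof
    assume "d = scaling v"
    then show ?thesis
      using scaling_comp_scaling_conj[OF nz] roots_mult[OF v(1) assms(2)] scaling_in_Dn[OF v(1)] by blast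
  next
    assume d: "d = scaling v \<circ> B"
    show ?thesis
    proof (cases "f = T")
      case True
      have "v / (u * \<omega>) \<in> roots" "v / \<omega> \<in> roots"
        using v(1) assms(2) omega by (auto intro: roots_divide roots_mult)
      then show ?thesis
        using B_comp_scaling_conj_T[OF nz] d True scaling_comp_B_in_Dn by blast
    next
      case False
      with assms(3) have f: "f = inv_into UNIV T" by simp
      have "v / u \<in> roots" "v * \<omega> \<in> roots"
        using v(1) assms(2) omega by (auto intro: roots_divide roots_mult)
      then show ?thesis
        using B_comp_scaling_conj_inv_T[OF nz] d f scaling_comp_B_in_Dn by blast
    qed
  qed
qed

lemma Dn_comp_Gamma:
  assumes "\<gamma> \<in> \<Gamma>" "d \<in> Dn"
  shows "\<exists>\<gamma>'\<in>\<Gamma>. \<exists>d'\<in>Dn. d \<circ> \<gamma> = \<gamma>' \<circ> d'"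
proof -
  define M where "M = {\<gamma>. \<forall>d\<in>Dn. \<exists>\<gamma>'\<in>\<Gamma>. \<exists>d'\<in>Dn. d \<circ> \<gamma> = \<gamma>' \<circ> d'}"
  have step: "scaling_conj u f \<circ> h \<in> M"
    if "u \<in> roots" "f \<in> {T, inv_into UNIV T}" "h \<in> M" for u f h
    unfolding M_def
  proof (intro CollectI ballI)
    fix d
    assume "d \<in> Dn"
    show "\<exists>\<gamma>'\<in>\<Gamma>. \<exists>d'\<in>Dn. d \<circ> (scaling_conj u f \<circ> h) = \<gamma>' \<circ> d'"
    proof -
      obtain u' d' where u': "u' \<in> roots" "d' \<in> Dn" "d \<circ> scaling_conj u f = scaling_conj u' f \<circ> d'"
        using Dn_comp_generator[OF \<open>d \<in> Dn\<close>] \<open>u \<in> roots\<close> \<open>f \<in> _\<close> by blast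
      obtain \<gamma> d'' where \<gamma>: "\<gamma> \<in> \<Gamma>" "d'' \<in> Dn" "d' \<circ> h = \<gamma> \<circ> d''"
        using \<open>h \<in> M\<close> u'(2) unfolding M_def by blast
      have "scaling_conj u' f \<in> \<Gamma>"
        using \<open>f \<in> _\<close> u'(1) scaling_conj_T_in_Gamma scaling_conj_inv_T_in_Gamma by blast
      then have "scaling_conj u' f \<circ> \<gamma> \<in> \<Gamma>" using \<gamma>(1) by (rule Gamma_comp)
      moreover have "d \<circ> (scaling_conj u f \<circ> h) = (scaling_conj u' f \<circ> \<gamma>) \<circ> d''"
        using u'(3) \<gamma>(3) by (metis comp_assoc)
      ultimately show ?thesis using \<gamma>(2) by blast
    qed
  qed
  have "\<Gamma> \<subseteq> M"
    unfolding Gamma_eq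
  proof (rule mgen_subset_of_left_closed)
    have "d \<circ> id = id \<circ> d" for d :: "cpt \<Rightarrow> cpt" by simp
    then show "id \<in> M" unfolding M_def using id_in_Gamma by blast
    show "f \<circ> h \<in> M" if "f \<in> (\<lambda>u. scaling_conj u T) ` roots" "h \<in> M" for f h
      using that step by blast
    show "inv_into UNIV f \<circ> h \<in> M" if "f \<in> (\<lambda>u. scaling_conj u T) ` roots" "h \<in> M" for f h
      using that step inv_into_scaling_conj[OF bij_T roots_nonzero] by auto
  qed
  with assms show ?thesis unfolding M_def by blast
qed

lemma K_decomp_Gamma_Dn: "k \<in> K \<Longrightarrow> \<exists>\<gamma>\<in>\<Gamma>. \<exists>d\<in>Dn. k = \<gamma> \<circ> d"
proof -
  define M where "M = {\<gamma> \<circ> d | \<gamma> d. \<gamma> \<in> \<Gamma> \<and> d \<in> Dn}"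
  have step: "f \<circ> h \<in> M" if "f \<in> \<Gamma> \<union> Dn" "h \<in> M" for f h
  proof -
    obtain \<gamma> d where h: "h = \<gamma> \<circ> d" "\<gamma> \<in> \<Gamma>" "d \<in> Dn" using \<open>h \<in> M\<close> unfolding M_def by blast
    show ?thesis
    proof (cases "f \<in> \<Gamma>")
      case True
      then have "f \<circ> h = (f \<circ> \<gamma>) \<circ> d" "f \<circ> \<gamma> \<in> \<Gamma>" using h Gamma_comp by (auto simp: comp_assoc)
      then show ?thesis using h(3) unfolding M_def by blast
    next
      case False
      then have "f \<in> Dn" using that(1) by blast
      then obtain \<gamma>' d' where "\<gamma>' \<in> \<Gamma>" "d' \<in> Dn" "f \<circ> \<gamma> = \<gamma>' \<circ> d'"
        using Dn_comp_Gamma h(2) by blast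
      then have "f \<circ> h = \<gamma>' \<circ> (d' \<circ> d)" "d' \<circ> d \<in> Dn"
        using h Dn_comp by (auto simp: comp_assoc) (metis comp_assoc)
      then show ?thesis using \<open>\<gamma>' \<in> \<Gamma>\<close> unfolding M_def by blast
    qed
  qed
  have inv_AB: "inv_into UNIV A \<in> Dn" "inv_into UNIV B \<in> Dn"
    using mgen_AB_eq_Dn mgen_inv[of _ "{A, B}"] by auto
  have "K \<subseteq> M"
    unfolding K_def
  proof (rule mgen_subset_of_left_closed)
    have "id = id \<circ> id" by simp
    then show "id \<in> M" unfolding M_def using id_in_Gamma id_in_Dn by blast
  qed (use step T_in_Gamma Gamma_inv[OF T_in_Gamma] inv_AB A_in_Dn B_in_Dn in auto)
  then show "k \<in> K \<Longrightarrow> ?thesis" unfolding M_def by blast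
qed

lemma card_Dn: "card Dn = 2 * n"
proof -
  have "inj_on scaling roots" using scaling_inj by (meson inj_onI)
  moreover have "inj_on (\<lambda>u. scaling u \<circ> B) roots"
  proof (rule inj_onI)
    fix u v
    assume "scaling u \<circ> B = scaling v \<circ> B"
    then have "scaling u (B (Some 1)) = scaling v (B (Some 1))" by (metis comp_apply)
    then show "u = v" by (simp add: B_def moeb_def)
  qed
  moreover have "scaling ` roots \<inter> (\<lambda>u. scaling u \<circ> B) ` roots = {}"
  proof -
    have "scaling u None \<noteq> (scaling v \<circ> B) None" for u v by simp
    then have "scaling u \<noteq> scaling v \<circ> B" for u v by metis
    then show ?thesis by blast
  qed
  moreover have "finite roots" using card_roots n_ge_2 card.infinite by fastforce
  ultimately show ?thesis
    unfolding Dn_def by (simp add: card_Un_disjoint card_image card_roots)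
qed

lemma card_rcosets_Gamma: "card (rcosets\<^bsub>moeb_group K\<^esub> \<Gamma>) = 2 * n"
proof -
  interpret K: group "moeb_group K" by (rule group_moeb_group[OF kleinian_K])
  have "card (rcosets\<^bsub>moeb_group K\<^esub> \<Gamma>) = card Dn"
  proof (rule K.card_rcosets_eq_card_transversal[OF subgroup_Gamma])
    show "Dn \<subseteq> carrier (moeb_group K)" using Dn_subset_K by (simp add: moeb_group_def)
    show "\<exists>h\<in>\<Gamma>. \<exists>r\<in>Dn. k = h \<otimes>\<^bsub>moeb_group K\<^esub> r" if "k \<in> carrier (moeb_group K)" for k
      using that K_decomp_Gamma_Dn by (simp add: moeb_group_def)
    show "r = r'" if "h \<in> \<Gamma>" "r \<in> Dn" "r' \<in> Dn" "r = h \<otimes>\<^bsub>moeb_group K\<^esub> r'" for h r r'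
    proof -
      have r: "r = h \<circ> r'" using that(4) by (simp add: moeb_group_def)
      have "r' (Some 0) \<in> {None, Some 0}" "r (Some 0) \<in> {None, Some 0}"
        using Dn_zero_infinity that(2,3) by simp_all
      moreover have "h (r' (Some 0)) = r (Some 0)" using r by simp
      ultimately have "h = id" using Gamma_eq_id[OF that(1)] by simp
      with r show ?thesis by simp
    qed
  qed
  then show ?thesis by (simp add: card_Dn)
qed

lemma Gamma_not_normal: "\<not> \<Gamma> \<lhd> moeb_group K"
proof
  assume "\<Gamma> \<lhd> moeb_group K"
  moreover have B: "B \<in> K" using B_in_Dn Dn_subset_K by blast
  ultimately have "B \<otimes>\<^bsub>moeb_group K\<^esub> T \<otimes>\<^bsub>moeb_group K\<^esub> inv\<^bsub>moeb_group K\<^esub> B \<in> \<Gamma>"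
    using normal.inv_op_closed2 T_in_Gamma by (fastforce simp: moeb_group_def)
  moreover have "inv\<^bsub>moeb_group K\<^esub> B = B"
    using inv_moeb_group[OF kleinian_K B] inv_into_B by simp
  moreover have "B \<circ> T \<circ> B = scaling (1 / \<omega>) \<circ> T"
    by (rule ext) (simp add: B_T)
  ultimately have "scaling (1 / \<omega>) \<circ> T \<in> \<Gamma>" by (simp add: moeb_group_def)
  then have "(scaling (1 / \<omega>) \<circ> T) \<circ> inv_into UNIV T \<in> \<Gamma>"
    by (rule Gamma_comp[OF _ Gamma_inv[OF T_in_Gamma]])
  moreover have "(scaling (1 / \<omega>) \<circ> T) \<circ> inv_into UNIV T = scaling (1 / \<omega>)"
    by (simp add: fun_eq_iff)
  ultimately have "scaling (1 / \<omega>) \<in> \<Gamma>" by simp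
  then have "scaling (1 / \<omega>) = id" by (rule Gamma_eq_id[of _ None]) simp_all
  then show False using scaling_inj[of "1 / \<omega>" 1] omega_neq_1 by simp
qed

lemma scaling_conj_T_frontier_of:
  assumes "u \<noteq> 0"
  shows "scaling_conj u T ` (riemann_sphere frontier_of (scaling u ` D1))
    = riemann_sphere frontier_of (scaling u ` D2)"
proof -
  have "scaling_conj u T ` (riemann_sphere frontier_of (scaling u ` D1))
      = scaling u ` T ` (riemann_sphere frontier_of D1)"
    unfolding scaling_conj_def frontier_of_image_scaling[OF assms] by (simp add: image_comp assms)
  then show ?thesis unfolding T_bdry frontier_of_image_scaling[OF assms] .
qed

lemma schottky_Gamma: "schottky \<Gamma> n"
proof -
  define gen where "gen j = (A ^^ j) \<circ> T \<circ> inv_into UNIV (A ^^ j)" for j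
  define E E' where "E i = scaling (\<omega> ^ i) ` D1" and "E' i = scaling (\<omega> ^ i) ` D2" for i
  define al al' where "al i = riemann_sphere frontier_of E i"
    and "al' i = riemann_sphere frontier_of E' i" for i
  define D where "D = UNIV - (\<Union>i<n. E i \<union> E' i)"
  interpret ping_pong roots "\<lambda>u. scaling_conj u T" "\<lambda>u. scaling u ` D1" "\<lambda>u. scaling u ` D2"
    by (rule ping_pong_Gamma)
  have nz: "\<omega> ^ i \<noteq> 0" for i using omega_nonzero by simp
  have gen: "gen i = scaling_conj (\<omega> ^ i) T" for i by (simp add: gen_def generator_eq)
  have discs: "closed_disc (E i)" "closed_disc (E' i)" for i
    unfolding E_def E'_def using closed_disc_image_scaling[OF nz] D1_disc D2_disc by auto
  have "None \<notin> E i" "None \<notin> E' i" for i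
    using zero_infinity_notin_image_scaling[OF _ nz] unfolding E_def E'_def by auto
  then have loops: "simple_loop (al i)" "simple_loop (al' i)" for i
    unfolding al_def al'_def using simple_loop_frontier_of_closed_disc discs by auto
  have disjoint_E_E': "E i \<inter> E' j = {}" for i j
    unfolding E_def E'_def by (rule E_E'_disjoint[OF omega_power_in_roots omega_power_in_roots])
  have disjoint_E_E: "E i \<inter> E j = {}" "E' i \<inter> E' j = {}" if "i < n" "j < n" "i \<noteq> j" for i j
  proof -
    have "\<omega> ^ i \<noteq> \<omega> ^ j" using omega_power_inj that by blast
    then show "E i \<inter> E j = {}" "E' i \<inter> E' j = {}"
      unfolding E_def E'_def
      by (intro E_disjoint E'_disjoint omega_power_in_roots; assumption)+
  qed
  have boundary: "gen i ` al i = al' i" for i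
    unfolding al_def al'_def E_def E'_def gen by (rule scaling_conj_T_frontier_of[OF nz])
  have exterior: "gen i ` D \<inter> D = {}" if "i < n" for i
  proof -
    have "gen i x \<in> E' i" if "x \<in> D" for x
    proof -
      have "x \<notin> scaling (\<omega> ^ i) ` D1" using \<open>x \<in> D\<close> \<open>i < n\<close> unfolding D_def E_def by blast
      then show ?thesis unfolding gen E'_def by (rule maps_outside_into[OF omega_power_in_roots])
    qed
    then show ?thesis using \<open>i < n\<close> unfolding D_def by blast
  qed
  have Gamma_gen: "\<Gamma> = mgen (gen ` {..<n})"
    unfolding \<Gamma>_def gen_def by (rule arg_cong[where f = mgen]) blast
  have lox: "loxodromic (gen i)" for i
    unfolding gen by (rule loxodromic_scaling_conj[OF T_lox nz])
  show ?thesis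
    unfolding schottky_def
  proof (intro conjI[OF kleinian_Gamma], rule exI[of _ gen], rule exI[of _ al], rule exI[of _ al'],
      rule exI[of _ E], rule exI[of _ E'], rule exI[of _ D], intro conjI allI impI)
  qed (simp_all add: Gamma_gen lox loops discs disjoint_E_E' disjoint_E_E boundary exterior
      flip: al_def al'_def D_def)
qed

end

theorem mainTheorem9:
  fixes n :: nat and A B T :: "cpt \<Rightarrow> cpt" and D1 D2 :: "cpt set"
  assumes n2: "n \<ge> 2" and n_even: "even n"
    and A_def: "A = moeb (exp (2 * pi * \<i> / of_nat n)) 0 0 1"
    and B_def: "B = moeb 0 1 1 0"
    and T_lox: "loxodromic T"
    and T_conj: "T \<circ> B \<circ> inv_into UNIV T = A \<circ> B"
    and D1_disc: "closed_disc D1" and D2_disc: "closed_disc D2"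
    and sep: "\<forall>h\<in>mgen {A, B}. h ` D1 \<inter> D2 = {}"
    and pi1: "precisely_invariant D1 (mgen {B}) (mgen {A, B})"
    and pi2: "precisely_invariant D2 (mgen {A \<circ> B}) (mgen {A, B})"
    and T_bdry: "T ` (riemann_sphere frontier_of D1) = riemann_sphere frontier_of D2"
    and T_ext: "T ` (UNIV - D1) = riemann_sphere interior_of D2"
    and K_kleinian: "kleinian (mgen {A, B, T})"
  shows "schottky (mgen {(A ^^ j) \<circ> T \<circ> inv_into UNIV (A ^^ j) | j. j < n}) n
       \<and> subgroup (mgen {(A ^^ j) \<circ> T \<circ> inv_into UNIV (A ^^ j) | j. j < n}) (moeb_group (mgen {A, B, T}))
       \<and> card (rcosets\<^bsub>moeb_group (mgen {A, B, T})\<^esub> (mgen {(A ^^ j) \<circ> T \<circ> inv_into UNIV (A ^^ j) | j. j < n})) = 2 * n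
       \<and> \<not> (mgen {(A ^^ j) \<circ> T \<circ> inv_into UNIV (A ^^ j) | j. j < n}) \<lhd> moeb_group (mgen {A, B, T})"
proof -
  interpret dihedral_hnn n A B T D1 D2
    by unfold_locales (fact n2 A_def B_def T_lox T_conj D1_disc D2_disc sep pi1 pi2 T_bdry T_ext K_kleinian)+
  show ?thesis
    using schottky_Gamma subgroup_Gamma card_rcosets_Gamma Gamma_not_normal
    unfolding \<Gamma>_def K_def by blast
qed

end
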